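(* Let $M,N\ge1$ be integers and let $f_0,\ldots,f_{K-1}$, $K\ge2$, be distinct functions $\mathbb{Z}_M\to\mathbb{Z}_N$. Let $\delta_{\min}$ be the minimum over all pairs $j\neq j'$ of the number of $x\in\mathbb{Z}_M$ with $f_j(x)\neq f_{j'}(x)$, and assume $\delta_{\min}<M$. If $C$ is a positive integer with $$C>\frac{\ln(K-1)}{\ln M-\ln(M-\delta_{\min})},$$ then the $C$-fold tensor powers $U_{f_0}^{\otimes C},\ldots,U_{f_{K-1}}^{\otimes C}$ of the standard oracle operators are unambiguously distinguishable.
   Context: For $f:\mathbb{Z}_M\to\mathbb{Z}_N$ the standard oracle operator is the unitary $U_f$ on $\mathcal{H}_M\otimes\mathcal{H}_N$ (with orthonormal bases $\{|x\rangle\}_{x\in\mathbb{Z}_M}$, $\{|y\rangle\}_{y\in\mathbb{Z}_N}$) given by $U_f|x\rangle\otimes|y\rangle=|x\rangle\otimes|y\oplus f(x)\rangle$, $\oplus$ being addition mod $N$; $U_f^{\otimes C}$ acts on $(\mathcal{H}_M\otimes\mathcal{H}_N)^{\otimes C}$ (parallel calls on separate registers). A finite list of unitary operators $W_1,\ldots,W_K$ on a finite-dimensional Hilbert space $\mathcal{H}$ is called unambiguously distinguishable if there exist a finite-dimensional ancilla space $\mathcal{H}_A$ and a unit vector $|\psi\rangle\in\mathcal{H}\otimes\mathcal{H}_A$ such that the vectors $(W_j\otimes\mathbb{1}_A)|\psi\rangle$ are linearly independent. *)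

theory Defs
  imports Complex_Main
begin

text \<open>Finite-dimensional Hilbert spaces are represented concretely by a finite set B of
  orthonormal basis labels; a vector is a function from labels to complex coefficients
  (vanishing outside B).\<close>

definition perm_op :: "'b set \<Rightarrow> ('b \<Rightarrow> 'b) \<Rightarrow> ('b \<Rightarrow> complex) \<Rightarrow> ('b \<Rightarrow> complex)" where
  "perm_op B \<pi> v = (\<lambda>b'. \<Sum>b\<in>B. if \<pi> b = b' then v b else 0)"

text \<open>Basis action of the standard oracle on H_M (x) H_N:  |x,y> |-> |x, y (+) f x>,
  with (+) addition mod N.\<close>
definition oracle_basis :: "nat \<Rightarrow> (nat \<Rightarrow> nat) \<Rightarrow> nat \<times> nat \<Rightarrow> nat \<times> nat" where
  "oracle_basis N f = (\<lambda>(x, y). (x, (y + f x) mod N))"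

text \<open>Basis labels of (H_M (x) H_N)^(x)C: length-C lists of pairs (x,y), x<M, y<N.\<close>
definition oracle_tp_basis :: "nat \<Rightarrow> nat \<Rightarrow> nat \<Rightarrow> (nat \<times> nat) list set" where
  "oracle_tp_basis M N C = {bs. length bs = C \<and> (\<forall>p\<in>set bs. fst p < M \<and> snd p < N)}"

text \<open>U_f^(x)C : acts on each of the C registers by U_f, i.e. on product basis vectors
  |b_1 ... b_C> |-> |U_f b_1 ... U_f b_C>, extended linearly.\<close>
definition oracle_tensor_power ::
  "nat \<Rightarrow> nat \<Rightarrow> nat \<Rightarrow> (nat \<Rightarrow> nat) \<Rightarrow> ((nat \<times> nat) list \<Rightarrow> complex) \<Rightarrow> ((nat \<times> nat) list \<Rightarrow> complex)" where
  "oracle_tensor_power M N C f = perm_op (oracle_tp_basis M N C) (map (oracle_basis N f))"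

text \<open>W (x) 1_A, where the ancilla H_A has orthonormal basis labelled by {..<d}.\<close>
definition tensor_id :: "(('b \<Rightarrow> complex) \<Rightarrow> ('b \<Rightarrow> complex)) \<Rightarrow> ('b \<times> nat \<Rightarrow> complex) \<Rightarrow> ('b \<times> nat \<Rightarrow> complex)" where
  "tensor_id W psi = (\<lambda>(b, a). W (\<lambda>b'. psi (b', a)) b)"

definition lin_indep_vecs :: "'c set \<Rightarrow> nat \<Rightarrow> (nat \<Rightarrow> 'c \<Rightarrow> complex) \<Rightarrow> bool" where
  "lin_indep_vecs S K v \<longleftrightarrow>
     (\<forall>c :: nat \<Rightarrow> complex. (\<forall>p\<in>S. (\<Sum>j<K. c j * v j p) = 0) \<longrightarrow> (\<forall>j<K. c j = 0))"

definition unamb_distinguishable ::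
  "'b set \<Rightarrow> nat \<Rightarrow> (nat \<Rightarrow> ('b \<Rightarrow> complex) \<Rightarrow> ('b \<Rightarrow> complex)) \<Rightarrow> bool" where
  "unamb_distinguishable B K W \<longleftrightarrow>
     (\<exists>(d::nat) (psi :: 'b \<times> nat \<Rightarrow> complex).
        (\<forall>p. p \<notin> B \<times> {..<d} \<longrightarrow> psi p = 0) \<and>
        (\<Sum>p\<in>B \<times> {..<d}. (cmod (psi p))\<^sup>2) = 1 \<and>
        lin_indep_vecs (B \<times> {..<d}) K (\<lambda>j. tensor_id (W j) psi))"

definition hamming_dist :: "nat \<Rightarrow> (nat \<Rightarrow> nat) \<Rightarrow> (nat \<Rightarrow> nat) \<Rightarrow> nat" where
  "hamming_dist M f g = card {x\<in>{..<M}. f x \<noteq> g x}"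

definition delta_min :: "nat \<Rightarrow> nat \<Rightarrow> (nat \<Rightarrow> nat \<Rightarrow> nat) \<Rightarrow> nat" where
  "delta_min M K fs = Min {hamming_dist M (fs j) (fs j') | j j'. j < K \<and> j' < K \<and> j \<noteq> j'}"

end

theory Submission
  imports Defs
begin

(* Probe with the uniform superposition of all basis vectors |x_1,0>...|x_C,0>; no ancilla
   is needed.  The C-fold tensor power of U_f permutes basis vectors and sends this state to
   the uniform superposition of all C-tuples of points of the graph of f.  The outputs for f_k
   and f_j share a^C basis vectors, where a <= M - delta_min is the number of points where
   f_k and f_j agree, while each output is supported on M^C of them.  The bound on C says
   exactly (K-1)(M - delta_min)^C < M^C, so the matrix of these overlaps is strictly
   diagonally dominant, and any vanishing linear combination of the outputs is trivial. *)

definition words :: "nat \<Rightarrow> 'a set \<Rightarrow> 'a list set" where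
  "words n A = {xs. set xs \<subseteq> A \<and> length xs = n}"

lemma card_words: "finite A \<Longrightarrow> card (words n A) = card A ^ n"
  unfolding words_def by (rule card_lists_length_eq)

lemma finite_words: "finite A \<Longrightarrow> finite (words n A)"
  unfolding words_def by (rule finite_lists_length_eq)

lemma words_mono: "A \<subseteq> B \<Longrightarrow> words n A \<subseteq> words n B"
  unfolding words_def by blast

lemma words_Int: "words n A \<inter> words n B = words n (A \<inter> B)"
  unfolding words_def by blast

lemma map_image_words: "map f ` words n A = words n (f ` A)"
proof
  show "map f ` words n A \<subseteq> words n (f ` A)"
    by (fastforce simp: words_def)
  show "words n (f ` A) \<subseteq> map f ` words n A"
  proof
    fix ys assume ys: "ys \<in> words n (f ` A)"
    then have "ys \<in> map f ` lists A"
      by (auto simp: words_def lists_image[symmetric])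
    with ys show "ys \<in> map f ` words n A"
      by (auto simp: words_def)
  qed
qed

lemma inj_on_map_words: "inj_on f A \<Longrightarrow> inj_on (map f) (words n A)"
  by (rule inj_on_mapI) (auto simp: words_def intro: inj_on_subset)

definition graph_on :: "'a set \<Rightarrow> ('a \<Rightarrow> 'b) \<Rightarrow> ('a \<times> 'b) set" where
  "graph_on A f = (\<lambda>x. (x, f x)) ` A"

lemma finite_graph_on: "finite A \<Longrightarrow> finite (graph_on A f)"
  unfolding graph_on_def by simp

lemma card_graph_on: "card (graph_on A f) = card A"
  unfolding graph_on_def by (rule card_image) (auto simp: inj_on_def)

lemma graph_on_Int: "graph_on A f \<inter> graph_on A g = graph_on {x\<in>A. f x = g x} f"
  unfolding graph_on_def by (auto simp: image_iff)

lemma inj_on_graph_on: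
  assumes "\<And>p. fst (h p) = fst p"
  shows "inj_on h (graph_on A f)"
proof (rule inj_onI)
  fix p q assume "p \<in> graph_on A f" "q \<in> graph_on A f" "h p = h q"
  moreover from \<open>h p = h q\<close> have "fst p = fst q"
    using assms by metis
  ultimately show "p = q"
    by (auto simp: graph_on_def)
qed

lemma perm_op_indicator:
  assumes "finite B" "S \<subseteq> B" "inj_on \<pi> S"
  shows "perm_op B \<pi> (\<lambda>b. if b \<in> S then a else 0) = (\<lambda>b. if b \<in> \<pi> ` S then a else 0)"
proof
  fix b'
  have "perm_op B \<pi> (\<lambda>b. if b \<in> S then a else 0) b' = (\<Sum>b\<in>S. if \<pi> b = b' then a else 0)"
    unfolding perm_op_def using assms(1,2) by (intro sum.mono_neutral_cong_right) auto
  also have "\<dots> = (\<Sum>y\<in>\<pi> ` S. if y = b' then a else 0)"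
    by (simp add: sum.reindex[OF assms(3)])
  also have "\<dots> = (if b' \<in> \<pi> ` S then a else 0)"
    using finite_subset[OF assms(2,1)] by simp
  finally show "perm_op B \<pi> (\<lambda>b. if b \<in> S then a else 0) b' = (if b' \<in> \<pi> ` S then a else 0)" .
qed

lemma oracle_tp_basis_eq_words: "oracle_tp_basis M N C = words C ({..<M} \<times> {..<N})"
  unfolding oracle_tp_basis_def words_def by force

lemma oracle_basis_image_graph_on_0:
  assumes "\<forall>x<M. f x < N"
  shows "oracle_basis N f ` graph_on {..<M} (\<lambda>_. 0) = graph_on {..<M} f"
  using assms unfolding oracle_basis_def graph_on_def by (force simp: image_image)

lemma oracle_tensor_power_zero_words:
  assumes "\<forall>x<M. f x < N" "0 < N"
  shows "oracle_tensor_power M N C f (\<lambda>b. if b \<in> words C (graph_on {..<M} (\<lambda>_. 0)) then a else 0)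
    = (\<lambda>b. if b \<in> words C (graph_on {..<M} f) then a else 0)"
proof -
  have "graph_on {..<M} (\<lambda>_. 0) \<subseteq> {..<M} \<times> {..<N}"
    using assms(2) unfolding graph_on_def by auto
  then have "words C (graph_on {..<M} (\<lambda>_. 0)) \<subseteq> oracle_tp_basis M N C"
    unfolding oracle_tp_basis_eq_words by (rule words_mono)
  moreover have "inj_on (oracle_basis N f) (graph_on {..<M} (\<lambda>_. 0))"
    by (rule inj_on_graph_on) (simp add: oracle_basis_def split_beta)
  ultimately show ?thesis
    unfolding oracle_tensor_power_def
    by (simp add: perm_op_indicator inj_on_map_words map_image_words oracle_tp_basis_eq_words
        finite_words oracle_basis_image_graph_on_0[OF assms(1)])
qed

lemma card_agree_eq_diff_hamming_dist:
  "card {x\<in>{..<M}. f x = g x} = M - hamming_dist M f g"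
proof -
  have "{x\<in>{..<M}. f x = g x} \<union> {x\<in>{..<M}. f x \<noteq> g x} = {..<M}"
    by blast
  then have "M = card ({x\<in>{..<M}. f x = g x} \<union> {x\<in>{..<M}. f x \<noteq> g x})"
    by simp
  also have "\<dots> = card {x\<in>{..<M}. f x = g x} + card {x\<in>{..<M}. f x \<noteq> g x}"
    by (rule card_Un_disjoint) auto
  finally show ?thesis
    unfolding hamming_dist_def by simp
qed

lemma finite_hamming_dists:
  fixes fs :: "nat \<Rightarrow> nat \<Rightarrow> nat"
  shows "finite {hamming_dist M (fs j) (fs j') | j j'. j < K \<and> j' < K \<and> j \<noteq> j'}"
proof (rule finite_subset)
  show "{hamming_dist M (fs j) (fs j') | j j'. j < K \<and> j' < K \<and> j \<noteq> j'}
      \<subseteq> (\<lambda>(j, j'). hamming_dist M (fs j) (fs j')) ` ({..<K} \<times> {..<K})"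
    by force
qed simp

lemma delta_min_le_hamming_dist:
  assumes "j < K" "j' < K" "j \<noteq> j'"
  shows "delta_min M K fs \<le> hamming_dist M (fs j) (fs j')"
  unfolding delta_min_def using assms finite_hamming_dists by (auto intro: Min_le)

lemma delta_min_pos:
  assumes "2 \<le> K" and "\<forall>j<K. \<forall>j'<K. j \<noteq> j' \<longrightarrow> (\<exists>x<M. fs j x \<noteq> fs j' x)"
  shows "0 < delta_min M K fs"
proof -
  have "0 < hamming_dist M (fs j) (fs j')" if "j < K" "j' < K" "j \<noteq> j'" for j j'
    using assms(2) that unfolding hamming_dist_def by (auto simp: card_gt_0_iff)
  moreover have "hamming_dist M (fs 0) (fs 1)
      \<in> {hamming_dist M (fs j) (fs j') | j j'. j < K \<and> j' < K \<and> j \<noteq> j'}"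
    using assms(1) by force
  ultimately show ?thesis
    unfolding delta_min_def using finite_hamming_dists by (subst Min_gr_iff) auto
qed

lemma strictly_diag_dominant_kernel_trivial:
  fixes G :: "nat \<Rightarrow> nat \<Rightarrow> 'a::real_normed_div_algebra"
  assumes dominant: "\<forall>k<K. (\<Sum>j\<in>{..<K}-{k}. norm (G k j)) < norm (G k k)"
    and kernel: "\<forall>k<K. (\<Sum>j<K. c j * G k j) = 0"
  shows "\<forall>j<K. c j = 0"
proof (cases "K = 0")
  case False
  \<comment> \<open>Levy-Desplanques: the row of a coefficient of largest modulus forces it to vanish.\<close>
  have "Max ((\<lambda>j. norm (c j)) ` {..<K}) \<in> (\<lambda>j. norm (c j)) ` {..<K}"
    using False by (intro Max_in) auto
  then obtain k where k: "k < K" and k_max: "norm (c k) = Max ((\<lambda>j. norm (c j)) ` {..<K})"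
    by auto
  have max: "norm (c j) \<le> norm (c k)" if "j < K" for j
    using that by (simp add: k_max)
  define R where "R = {..<K} - {k}"
  have "c k * G k k = - (\<Sum>j\<in>R. c j * G k j)"
    using kernel k by (simp add: R_def sum.remove eq_neg_iff_add_eq_0)
  then have "norm (c k) * norm (G k k) = norm (\<Sum>j\<in>R. c j * G k j)"
    by (metis norm_minus_cancel norm_mult)
  also have "\<dots> \<le> (\<Sum>j\<in>R. norm (c j) * norm (G k j))"
    by (rule order_trans[OF norm_sum]) (simp add: norm_mult)
  also have "\<dots> \<le> (\<Sum>j\<in>R. norm (c k) * norm (G k j))"
    by (rule sum_mono) (auto simp: R_def intro: mult_right_mono max)
  also have "\<dots> = norm (c k) * (\<Sum>j\<in>R. norm (G k j))"
    by (simp add: sum_distrib_left)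
  finally have "norm (c k) * norm (G k k) \<le> norm (c k) * (\<Sum>j\<in>R. norm (G k j))" .
  with dominant k have "norm (c k) = 0"
    unfolding R_def by (metis mult_le_cancel_left_pos norm_ge_zero order.strict_iff_not
        order_le_less)
  then show ?thesis
    using max by (metis norm_le_zero_iff)
qed simp

lemma lin_indep_vecs_cong:
  assumes "\<And>j p. j < K \<Longrightarrow> p \<in> S \<Longrightarrow> v j p = w j p"
  shows "lin_indep_vecs S K v \<longleftrightarrow> lin_indep_vecs S K w"
proof -
  have "(\<Sum>j<K. c j * v j p) = (\<Sum>j<K. c j * w j p)" if "p \<in> S" for c p
    using assms that by (auto intro: sum.cong)
  then show ?thesis
    unfolding lin_indep_vecs_def by (simp cong: ball_cong)
qed

lemma lin_indep_vecs_times_lessThan_1: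
  "lin_indep_vecs (S \<times> {..<1::nat}) K v \<longleftrightarrow> lin_indep_vecs S K (\<lambda>j b. v j (b, 0))"
  unfolding lin_indep_vecs_def by (simp add: lessThan_Suc)

lemma lin_indep_vecs_indicators:
  assumes "finite S" "\<forall>j<K. T j \<subseteq> S" "a \<noteq> 0"
    and dominant: "\<forall>k<K. (\<Sum>j\<in>{..<K}-{k}. card (T k \<inter> T j)) < card (T k)"
  shows "lin_indep_vecs S K (\<lambda>j b. if b \<in> T j then a else 0)"
  unfolding lin_indep_vecs_def
proof (rule allI, rule impI)
  fix c :: "nat \<Rightarrow> complex"
  assume combination: "\<forall>p\<in>S. (\<Sum>j<K. c j * (if p \<in> T j then a else 0)) = 0"
  have vanish: "(\<Sum>j<K. if p \<in> T j then c j else 0) = 0" if "p \<in> S" for p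
  proof -
    have "a * (\<Sum>j<K. if p \<in> T j then c j else 0) = (\<Sum>j<K. c j * (if p \<in> T j then a else 0))"
      by (auto simp: sum_distrib_left intro!: sum.cong)
    with combination that \<open>a \<noteq> 0\<close> show ?thesis
      by simp
  qed
  \<comment> \<open>Summing the combination over T k yields row k of the overlap matrix applied to c.\<close>
  have kernel: "(\<Sum>j<K. c j * of_nat (card (T k \<inter> T j))) = 0" if "k < K" for k
  proof -
    have fin: "finite (T k)"
      using assms(1,2) that by (meson finite_subset)
    have "(\<Sum>j<K. c j * of_nat (card (T k \<inter> T j))) = (\<Sum>j<K. \<Sum>p\<in>T k. if p \<in> T j then c j else 0)"
      using fin by (simp add: sum.If_cases Int_absorb1 mult.commute)
    also have "\<dots> = (\<Sum>p\<in>T k. \<Sum>j<K. if p \<in> T j then c j else 0)"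
      by (rule sum.swap)
    also have "\<dots> = 0"
      using assms(2) that vanish by (auto intro: sum.neutral)
    finally show ?thesis .
  qed
  have "\<forall>k<K. (\<Sum>j\<in>{..<K}-{k}. norm (of_nat (card (T k \<inter> T j)) :: complex))
      < norm (of_nat (card (T k \<inter> T k)) :: complex)"
    using dominant by (simp flip: of_nat_sum)
  with kernel show "\<forall>j<K. c j = 0"
    using strictly_diag_dominant_kernel_trivial[of K "\<lambda>k j. of_nat (card (T k \<inter> T j))" c]
    by blast
qed

lemma mult_power_less_power_of_ln_bound:
  fixes a m M :: real
  assumes "0 < a" "0 < m" "m < M" "ln a / (ln M - ln m) < real C"
  shows "a * m ^ C < M ^ C"
proof -
  have "0 < ln M - ln m"
    using assms(2,3) by simp
  with assms(4) have "ln a + real C * ln m < real C * ln M"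
    by (simp add: divide_less_eq algebra_simps)
  then have "ln (a * m ^ C) < ln (M ^ C)"
    using assms(1-3) by (simp add: ln_mult ln_realpow)
  then show ?thesis
    using assms(1-3) by simp
qed

definition uniform_state :: "'b set \<Rightarrow> 'b \<times> nat \<Rightarrow> complex" where
  "uniform_state S = (\<lambda>(b, i). if i = 0 \<and> b \<in> S then complex_of_real (1 / sqrt (real (card S))) else 0)"

lemma uniform_state_support: "S \<subseteq> B \<Longrightarrow> \<forall>p. p \<notin> B \<times> {..<1} \<longrightarrow> uniform_state S p = 0"
  by (auto simp: uniform_state_def)

lemma uniform_state_normalized:
  assumes "finite B" "S \<subseteq> B" "S \<noteq> {}"
  shows "(\<Sum>p\<in>B \<times> {..<1}. (cmod (uniform_state S p))\<^sup>2) = 1"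
proof -
  have "B \<times> {..<1::nat} = (\<lambda>b. (b, 0)) ` B"
    by auto
  then have "(\<Sum>p\<in>B \<times> {..<1}. (cmod (uniform_state S p))\<^sup>2) = (\<Sum>b\<in>B. (cmod (uniform_state S (b, 0)))\<^sup>2)"
    by (simp add: sum.reindex inj_on_def)
  also have "\<dots> = (\<Sum>b\<in>S. 1 / real (card S))"
  proof (rule sum.mono_neutral_cong_right)
    show "(cmod (uniform_state S (b, 0)))\<^sup>2 = 1 / real (card S)" if "b \<in> S" for b
      using that by (simp add: uniform_state_def norm_divide power_divide)
  qed (use assms(1,2) in \<open>auto simp: uniform_state_def\<close>)
  also have "\<dots> = 1"
    using assms(1-3) finite_subset by (simp add: card_gt_0_iff)
  finally show ?thesis .
qed

lemma unamb_distinguishable_oracle_tensor_powers: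
  assumes "0 < M" "0 < N" and range: "\<forall>j<K. \<forall>x<M. fs j x < N"
    and dominant: "\<forall>k<K. (\<Sum>j\<in>{..<K}-{k}. card {x\<in>{..<M}. fs k x = fs j x} ^ C) < M ^ C"
  shows "unamb_distinguishable (oracle_tp_basis M N C) K (\<lambda>j. oracle_tensor_power M N C (fs j))"
proof -
  define B where "B = oracle_tp_basis M N C"
  define S where "S = words C (graph_on {..<M} (\<lambda>_. 0::nat))"
  define T where "T j = words C (graph_on {..<M} (fs j))" for j
  define a where "a = complex_of_real (1 / sqrt (real (card S)))"
  have card_S: "card S = M ^ C" and card_T: "card (T j) = M ^ C" for j
    by (simp_all add: S_def T_def card_words card_graph_on finite_graph_on)
  have "graph_on {..<M} (\<lambda>_. 0) \<subseteq> {..<M} \<times> {..<N}"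
    using \<open>0 < N\<close> by (auto simp: graph_on_def)
  then have "S \<subseteq> B"
    unfolding S_def B_def oracle_tp_basis_eq_words by (rule words_mono)
  have "graph_on {..<M} (fs j) \<subseteq> {..<M} \<times> {..<N}" if "j < K" for j
    using range that by (auto simp: graph_on_def)
  then have "T j \<subseteq> B" if "j < K" for j
    unfolding T_def B_def oracle_tp_basis_eq_words using that by (intro words_mono)
  have "finite B"
    by (simp add: B_def oracle_tp_basis_eq_words finite_words)
  have overlap: "card (T k \<inter> T j) = card {x\<in>{..<M}. fs k x = fs j x} ^ C" for k j
    by (simp add: T_def words_Int graph_on_Int card_words card_graph_on finite_graph_on)
  have psi: "uniform_state S = (\<lambda>(b, i). if i = 0 \<and> b \<in> S then a else 0)"
    unfolding uniform_state_def a_def ..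
  have oracle_output:
    "tensor_id (oracle_tensor_power M N C (fs j)) (uniform_state S) (b, 0) = (if b \<in> T j then a else 0)"
    if "j < K" for j b
    using oracle_tensor_power_zero_words[of M "fs j" N C a] range that \<open>0 < N\<close>
    unfolding tensor_id_def psi by (simp add: S_def T_def)
  have "a \<noteq> 0"
    using \<open>0 < M\<close> by (simp add: a_def card_S)
  then have "lin_indep_vecs B K (\<lambda>j b. if b \<in> T j then a else 0)"
    using \<open>finite B\<close> \<open>\<And>j. j < K \<Longrightarrow> T j \<subseteq> B\<close> dominant
    by (intro lin_indep_vecs_indicators) (auto simp: overlap card_T)
  then have "lin_indep_vecs (B \<times> {..<1}) K
      (\<lambda>j. tensor_id (oracle_tensor_power M N C (fs j)) (uniform_state S))"
    unfolding lin_indep_vecs_times_lessThan_1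
    by (subst lin_indep_vecs_cong[where w = "\<lambda>j b. if b \<in> T j then a else 0"])
      (simp_all add: oracle_output)
  moreover have "S \<noteq> {}"
    using card_S \<open>0 < M\<close> by (intro notI) simp
  ultimately show ?thesis
    unfolding unamb_distinguishable_def B_def[symmetric]
    using uniform_state_support[OF \<open>S \<subseteq> B\<close>] uniform_state_normalized[OF \<open>finite B\<close> \<open>S \<subseteq> B\<close>]
    by (intro exI[of _ 1] exI[of _ "uniform_state S"] conjI) simp_all
qed

theorem mainTheorem12:
  fixes M N K C :: nat and fs :: "nat \<Rightarrow> nat \<Rightarrow> nat"
  assumes "M \<ge> 1" and "N \<ge> 1" and "K \<ge> 2"
    and "\<forall>j<K. \<forall>x<M. fs j x < N"
    and "\<forall>j<K. \<forall>j'<K. j \<noteq> j' \<longrightarrow> (\<exists>x<M. fs j x \<noteq> fs j' x)"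
    and "delta_min M K fs < M"
    and "C > 0"
    and "real C > ln (real K - 1) / (ln (real M) - ln (real M - real (delta_min M K fs)))"
  shows "unamb_distinguishable (oracle_tp_basis M N C) K
           (\<lambda>j. oracle_tensor_power M N C (fs j))"
proof -
  define \<delta> where "\<delta> = delta_min M K fs"
  have "0 < \<delta>" "\<delta> < M"
    using delta_min_pos[OF assms(3,5)] assms(6) by (simp_all add: \<delta>_def)
  then have "real (K - 1) * real (M - \<delta>) ^ C < real M ^ C"
    using mult_power_less_power_of_ln_bound[of "real K - 1" "real M - real \<delta>" "real M" C] assms(3,8)
    by (simp add: \<delta>_def of_nat_diff)
  then have bound: "(K - 1) * (M - \<delta>) ^ C < M ^ C"
    by (metis of_nat_less_iff of_nat_mult of_nat_power)
  have "(\<Sum>j\<in>{..<K}-{k}. card {x\<in>{..<M}. fs k x = fs j x} ^ C) < M ^ C" if "k < K" for k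
  proof -
    have "card {x\<in>{..<M}. fs k x = fs j x} \<le> M - \<delta>" if "j \<in> {..<K}-{k}" for j
      unfolding card_agree_eq_diff_hamming_dist \<delta>_def
      using delta_min_le_hamming_dist[of k K j M fs] \<open>k < K\<close> that by auto
    then have "(\<Sum>j\<in>{..<K}-{k}. card {x\<in>{..<M}. fs k x = fs j x} ^ C) \<le> (\<Sum>j\<in>{..<K}-{k}. (M - \<delta>) ^ C)"
      by (intro sum_mono power_mono) simp_all
    also have "\<dots> = (K - 1) * (M - \<delta>) ^ C"
      using that by simp
    finally show ?thesis
      using bound by linarith
  qed
  then show ?thesis
    using assms(1,2,4) by (intro unamb_distinguishable_oracle_tensor_powers) auto
qed

end
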